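(* Let $G=(V,D,B)$ be a mixed graph, $v\in V$, and suppose $W\subseteq V$ satisfies the weak half-trek criterion with respect to $v$. Then there exists a set $Y\subseteq V$ satisfying the half-trek criterion with respect to $v$ such that $Y\cap\mathrm{htr}(v)=W\cap\mathrm{htr}(v)$.
   Context: A mixed graph is $G=(V,D,B)$ with $V=[m]$, $D\subseteq V\times V$ directed edges $v\to w$, $B$ symmetric set of bidirected edges $v\leftrightarrow w$, no self-loops. $\mathrm{pa}(v)=\{w:w\to v\in D\}$, $\mathrm{sib}(v)=\{w:w\leftrightarrow v\in B\}$. A path is a sequence of edges of $D\cup B$ connecting consecutive nodes (not necessarily simple; directed edges may be traversed either way). A trek from $v$ to $w$ is a path of the form $v=v^L_l\leftarrow\cdots\leftarrow v^L_0\leftrightarrow v^R_0\to\cdots\to v^R_r=w$ with $\mathrm{Left}=\{v^L_0,\dots,v^L_l\}$, $\mathrm{Right}=\{v^R_0,\dots,v^R_r\}$, or $v=v^L_l\leftarrow\cdots\leftarrow v^L_1\leftarrow v^T\to v^R_1\to\cdots\to v^R_r=w$ ($l,r\ge0$) with $\mathrm{Left}=\{v^T,v^L_1,\dots,v^L_l\}$, $\mathrm{Right}=\{v^T,v^R_1,\dots,v^R_r\}$. A half-trek is a trek with $|\mathrm{Left}|=1$. A system of treks from $X$ to $Y$ is a set of treks with distinct sources forming $X$ and distinct targets forming $Y$; it has no sided intersection if the Left sets are pairwise disjoint and the Right sets are pairwise disjoint. $\mathrm{htr}(v)$ is the set of $w\in V\setminus(\{v\}\cup\mathrm{sib}(v))$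 reachable from $v$ by a half-trek. $Y$ satisfies the half-trek criterion w.r.t. $v$ if (i) $|Y|=|\mathrm{pa}(v)|$, (ii) $Y\cap(\{v\}\cup\mathrm{sib}(v))=\emptyset$, (iii) there is a system of half-treks with no sided intersection from $Y$ to $\mathrm{pa}(v)$. $Y$ satisfies the weak half-trek criterion w.r.t. $v$ if (i) and (ii) hold and (iii') there is a system of treks with no sided intersection from $Y$ to $\mathrm{pa}(v)$ in which, for every $w\in Y\cap\mathrm{htr}(v)$, the trek with source $w$ is a half-trek. *)

theory Defs
  imports Main
begin

definition mixed_graph :: "nat \<Rightarrow> (nat \<times> nat) set \<Rightarrow> (nat \<times> nat) set \<Rightarrow> bool" where
  "mixed_graph m D B \<longleftrightarrow>
     D \<subseteq> {1..m} \<times> {1..m} \<and> B \<subseteq> {1..m} \<times> {1..m} \<and> sym B \<and>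
     (\<forall>x. (x, x) \<notin> D) \<and> (\<forall>x. (x, x) \<notin> B)"

definition pa :: "(nat \<times> nat) set \<Rightarrow> nat \<Rightarrow> nat set" where
  "pa D v = {w. (w, v) \<in> D}"

definition sib :: "(nat \<times> nat) set \<Rightarrow> nat \<Rightarrow> nat set" where
  "sib B v = {w. (w, v) \<in> B}"

definition dwalk :: "(nat \<times> nat) set \<Rightarrow> nat list \<Rightarrow> bool" where
  "dwalk D xs \<longleftrightarrow> xs \<noteq> [] \<and> (\<forall>i. Suc i < length xs \<longrightarrow> (xs ! i, xs ! Suc i) \<in> D)"

text \<open>A trek is encoded as (bidir, ls, rs).
  If bidir: ls = [vL0,...,vLl], rs = [vR0,...,vRr], with vL0 <-> vR0 in B and
  directed walks along ls and rs; the trek is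
  v = vLl <- ... <- vL0 <-> vR0 -> ... -> vRr = w.
  If not bidir: ls = [vT,vL1,...,vLl], rs = [vT,vR1,...,vRr], with directed walks
  along ls and rs (top node vT shared); the trek is
  v = vLl <- ... <- vL1 <- vT -> vR1 -> ... -> vRr = w.\<close>
type_synonym trek = "bool \<times> nat list \<times> nat list"

definition trek_left :: "trek \<Rightarrow> nat set" where
  "trek_left t = set (fst (snd t))"

definition trek_right :: "trek \<Rightarrow> nat set" where
  "trek_right t = set (snd (snd t))"

definition trek_source :: "trek \<Rightarrow> nat" where
  "trek_source t = last (fst (snd t))"

definition trek_target :: "trek \<Rightarrow> nat" where
  "trek_target t = last (snd (snd t))"

definition is_trek :: "nat \<Rightarrow> (nat \<times> nat) set \<Rightarrow> (nat \<times> nat) set \<Rightarrow> trek \<Rightarrow> bool" where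
  "is_trek m D B t \<longleftrightarrow>
     (case t of (bidir, ls, rs) \<Rightarrow>
        dwalk D ls \<and> dwalk D rs \<and> set ls \<subseteq> {1..m} \<and> set rs \<subseteq> {1..m} \<and>
        (if bidir then (hd ls, hd rs) \<in> B else hd ls = hd rs))"

definition is_half_trek :: "nat \<Rightarrow> (nat \<times> nat) set \<Rightarrow> (nat \<times> nat) set \<Rightarrow> trek \<Rightarrow> bool" where
  "is_half_trek m D B t \<longleftrightarrow> is_trek m D B t \<and> card (trek_left t) = 1"

definition system_of_treks :: "trek set \<Rightarrow> nat set \<Rightarrow> nat set \<Rightarrow> bool" where
  "system_of_treks T X Y \<longleftrightarrow>
     inj_on trek_source T \<and> trek_source ` T = X \<and>
     inj_on trek_target T \<and> trek_target ` T = Y"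

definition no_sided_intersection :: "trek set \<Rightarrow> bool" where
  "no_sided_intersection T \<longleftrightarrow>
     (\<forall>t\<in>T. \<forall>t'\<in>T. t \<noteq> t' \<longrightarrow>
        trek_left t \<inter> trek_left t' = {} \<and> trek_right t \<inter> trek_right t' = {})"

definition htr :: "nat \<Rightarrow> (nat \<times> nat) set \<Rightarrow> (nat \<times> nat) set \<Rightarrow> nat \<Rightarrow> nat set" where
  "htr m D B v = {w \<in> {1..m} - ({v} \<union> sib B v).
      \<exists>t. is_half_trek m D B t \<and> trek_source t = v \<and> trek_target t = w}"

definition HTC :: "nat \<Rightarrow> (nat \<times> nat) set \<Rightarrow> (nat \<times> nat) set \<Rightarrow> nat \<Rightarrow> nat set \<Rightarrow> bool" where
  "HTC m D B v Y \<longleftrightarrow>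
     card Y = card (pa D v) \<and> Y \<inter> ({v} \<union> sib B v) = {} \<and>
     (\<exists>T. (\<forall>t\<in>T. is_half_trek m D B t) \<and> system_of_treks T Y (pa D v) \<and>
          no_sided_intersection T)"

definition weak_HTC :: "nat \<Rightarrow> (nat \<times> nat) set \<Rightarrow> (nat \<times> nat) set \<Rightarrow> nat \<Rightarrow> nat set \<Rightarrow> bool" where
  "weak_HTC m D B v Y \<longleftrightarrow>
     card Y = card (pa D v) \<and> Y \<inter> ({v} \<union> sib B v) = {} \<and>
     (\<exists>T. (\<forall>t\<in>T. is_trek m D B t) \<and> system_of_treks T Y (pa D v) \<and>
          no_sided_intersection T \<and>
          (\<forall>t\<in>T. trek_source t \<in> htr m D B v \<longrightarrow> is_half_trek m D B t))"

end

theory Submission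
  imports Defs
begin

(* Let T be a system of treks from W to pa(v) witnessing the weak criterion.  Cut every
   trek t at its top, i.e. at the first node of its Left side (the node incident to the
   bidirected edge, or the top node); what remains is a half-trek from that node to the
   same target.  Left sides of distinct treks are disjoint, so the tops are distinct and
   the truncated treks again form a system without sided intersection, from Y = tops(T)
   to pa(v).  It remains to compare Y with W on htr(v).  The set R = {v} u sib(v) u htr(v)
   is exactly the set of nodes reachable from v by a half-trek; it is closed under
   directed edges, so a trek whose top lies in R has its source in R as well.  Hence for
   every t in T either t is a half-trek (and its top is its source), or its source lies
   outside htr(v), hence outside R, and then so does its top. *)

lemma dwalk_iff_successively:
  "dwalk D xs \<longleftrightarrow> xs \<noteq> [] \<and> successively (\<lambda>x y. (x, y) \<in> D) xs"
  unfolding dwalk_def successively_conv_nth ..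

definition trek_top :: "trek \<Rightarrow> nat" where
  "trek_top t = hd (fst (snd t))"

definition truncate_trek :: "trek \<Rightarrow> trek" where
  "truncate_trek t = (fst t, [trek_top t], snd (snd t))"

definition half_trek_reach :: "nat \<Rightarrow> (nat \<times> nat) set \<Rightarrow> (nat \<times> nat) set \<Rightarrow> nat \<Rightarrow> nat set" where
  "half_trek_reach m D B v =
     {w. \<exists>t. is_half_trek m D B t \<and> trek_source t = v \<and> trek_target t = w}"

lemma trek_top_in_left:
  assumes "is_trek m D B t"
  shows "trek_top t \<in> trek_left t"
  using assms by (auto simp: is_trek_def dwalk_def trek_top_def trek_left_def split: prod.splits)

lemma trek_top_in_range:
  assumes "is_trek m D B t"
  shows "trek_top t \<in> {1..m}"
proof -
  obtain b ls rs where t: "t = (b, ls, rs)" by (cases t)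
  have "ls \<noteq> []" and "set ls \<subseteq> {1..m}"
    using assms by (auto simp: t is_trek_def dwalk_def)
  then show ?thesis using hd_in_set by (fastforce simp: t trek_top_def)
qed

lemma trek_target_in_range:
  assumes "is_trek m D B t"
  shows "trek_target t \<in> {1..m}"
proof -
  obtain b ls rs where t: "t = (b, ls, rs)" by (cases t)
  have "rs \<noteq> []" and "set rs \<subseteq> {1..m}"
    using assms by (auto simp: t is_trek_def dwalk_def)
  then show ?thesis using last_in_set by (fastforce simp: t trek_target_def)
qed

(* A half-trek has a one-element Left side, so its source is its top. *)
lemma half_trek_source_eq_top:
  assumes "is_half_trek m D B t"
  shows "trek_source t = trek_top t"
proof -
  obtain b ls rs where t: "t = (b, ls, rs)" by (cases t)
  have "ls \<noteq> []" and "card (set ls) = 1"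
    using assms by (auto simp: t is_half_trek_def is_trek_def dwalk_def trek_left_def)
  then obtain a where "set ls = {a}" by (meson card_1_singletonE)
  then have "last ls = a" and "hd ls = a"
    using \<open>ls \<noteq> []\<close> last_in_set hd_in_set by blast+
  then show ?thesis by (simp add: t trek_source_def trek_top_def)
qed

lemma truncate_trek_simps [simp]:
  "trek_source (truncate_trek t) = trek_top t"
  "trek_target (truncate_trek t) = trek_target t"
  "trek_left (truncate_trek t) = {trek_top t}"
  "trek_right (truncate_trek t) = trek_right t"
  by (simp_all add: truncate_trek_def trek_source_def trek_target_def trek_left_def trek_right_def)

lemma half_trek_truncate_trek:
  assumes "is_trek m D B t"
  shows "is_half_trek m D B (truncate_trek t)"
proof -
  obtain b ls rs where t: "t = (b, ls, rs)" by (cases t)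
  have "trek_top t \<in> {1..m}" using trek_top_in_range[OF assms] .
  then show ?thesis
    using assms by (auto simp: t is_half_trek_def is_trek_def truncate_trek_def
        trek_left_def trek_top_def dwalk_def)
qed

(* Half-trek reachability is closed under directed edges: extend the Right side. *)
lemma half_trek_reach_step:
  assumes x: "x \<in> half_trek_reach m D B v" and xy: "(x, y) \<in> D" and y: "y \<in> {1..m}"
  shows "y \<in> half_trek_reach m D B v"
proof -
  obtain b ls rs where ht: "is_half_trek m D B (b, ls, rs)" and "last ls = v" and "last rs = x"
    using x by (auto simp: half_trek_reach_def trek_source_def trek_target_def)
  then have "dwalk D (rs @ [y])"
    using xy by (auto simp: is_half_trek_def is_trek_def dwalk_iff_successively
        successively_append_iff)
  then have "is_half_trek m D B (b, ls, rs @ [y])"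
    using ht y by (auto simp: is_half_trek_def is_trek_def trek_left_def dwalk_def)
  then show ?thesis
    using \<open>last ls = v\<close> by (force simp: half_trek_reach_def trek_source_def trek_target_def)
qed

lemma half_trek_reach_dwalk:
  assumes "dwalk D ls" and "set ls \<subseteq> {1..m}" and "hd ls \<in> half_trek_reach m D B v"
  shows "last ls \<in> half_trek_reach m D B v"
  using assms
proof (induction ls)
  case (Cons x xs)
  show ?case
  proof (cases xs)
    case (Cons y ys)
    have "(x, y) \<in> D" and "dwalk D xs"
      using Cons.prems(1) \<open>xs = y # ys\<close> by (simp_all add: dwalk_iff_successively)
    then have "hd xs \<in> half_trek_reach m D B v"
      using half_trek_reach_step Cons.prems \<open>xs = y # ys\<close> by simp
    then show ?thesis
      using Cons.IH \<open>dwalk D xs\<close> Cons.prems(2) \<open>xs = y # ys\<close> by simp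
  qed (use Cons.prems in simp)
qed (simp add: dwalk_def)

lemma half_trek_reach_eq:
  assumes mg: "mixed_graph m D B" and v: "v \<in> {1..m}"
  shows "half_trek_reach m D B v = {v} \<union> sib B v \<union> htr m D B v"
proof
  show "half_trek_reach m D B v \<subseteq> {v} \<union> sib B v \<union> htr m D B v"
  proof
    fix w assume w: "w \<in> half_trek_reach m D B v"
    then obtain t where "is_half_trek m D B t" "trek_source t = v" "trek_target t = w"
      by (auto simp: half_trek_reach_def)
    moreover from this have "w \<in> {1..m}"
      using trek_target_in_range unfolding is_half_trek_def by blast
    ultimately show "w \<in> {v} \<union> sib B v \<union> htr m D B v"
      unfolding htr_def by blast
  qed
next
  have "v \<in> half_trek_reach m D B v"
  proof -
    have "is_half_trek m D B (False, [v], [v])"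
      using v by (simp add: is_half_trek_def is_trek_def trek_left_def dwalk_def)
    then show ?thesis by (force simp: half_trek_reach_def trek_source_def trek_target_def)
  qed
  moreover have "w \<in> half_trek_reach m D B v" if "w \<in> sib B v" for w
  proof -
    have "(v, w) \<in> B" and "w \<in> {1..m}"
      using that mg by (auto simp: sib_def mixed_graph_def sym_def)
    then have "is_half_trek m D B (True, [v], [w])"
      using v by (simp add: is_half_trek_def is_trek_def trek_left_def dwalk_def)
    then show ?thesis by (force simp: half_trek_reach_def trek_source_def trek_target_def)
  qed
  moreover have "htr m D B v \<subseteq> half_trek_reach m D B v"
    by (auto simp: htr_def half_trek_reach_def)
  ultimately show "{v} \<union> sib B v \<union> htr m D B v \<subseteq> half_trek_reach m D B v"
    by blast
qed

(* The Left side of a trek is a directed walk from its top to its source, so a trek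
   whose top is half-trek reachable from v has a half-trek reachable source. *)
lemma trek_source_reach:
  assumes "is_trek m D B t" and "trek_top t \<in> half_trek_reach m D B v"
  shows "trek_source t \<in> half_trek_reach m D B v"
proof -
  obtain b ls rs where t: "t = (b, ls, rs)" by (cases t)
  show ?thesis
    using half_trek_reach_dwalk[of D ls m B v] assms
    by (simp add: t is_trek_def trek_top_def trek_source_def)
qed

lemma card_system_of_treks:
  assumes "system_of_treks T X Y"
  shows "card X = card Y"
  using assms card_image unfolding system_of_treks_def by metis

(* Without sided intersection, distinct treks have disjoint Left sides, hence distinct
   tops. *)
lemma trek_top_inj_on:
  assumes treks: "\<forall>t\<in>T. is_trek m D B t" and nsi: "no_sided_intersection T"
  shows "inj_on trek_top T"
proof (rule inj_onI)
  fix t t' assume t: "t \<in> T" and t': "t' \<in> T" and top: "trek_top t = trek_top t'"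
  have "trek_top t \<in> trek_left t" using treks t by (blast intro: trek_top_in_left)
  moreover have "trek_top t \<in> trek_left t'" using treks t' top by (metis trek_top_in_left)
  ultimately have "trek_left t \<inter> trek_left t' \<noteq> {}" by blast
  then show "t = t'"
    using nsi t t' unfolding no_sided_intersection_def by blast
qed

lemma truncated_system_of_treks:
  assumes treks: "\<forall>t\<in>T. is_trek m D B t" and sys: "system_of_treks T X Y"
    and nsi: "no_sided_intersection T"
  shows "\<forall>t\<in>truncate_trek ` T. is_half_trek m D B t"
    and "system_of_treks (truncate_trek ` T) (trek_top ` T) Y"
    and "no_sided_intersection (truncate_trek ` T)"
proof -
  have inj_top: "inj_on trek_top T" using trek_top_inj_on[OF treks nsi] .
  have source_trunc: "trek_source \<circ> truncate_trek = trek_top"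
    and target_trunc: "trek_target \<circ> truncate_trek = trek_target" by auto
  have inj_trunc: "inj_on truncate_trek T"
    using inj_top by (intro inj_on_imageI2[of trek_source]) (simp add: source_trunc)
  show "\<forall>t\<in>truncate_trek ` T. is_half_trek m D B t"
    using treks half_trek_truncate_trek by blast
  show "system_of_treks (truncate_trek ` T) (trek_top ` T) Y"
    using sys inj_top
    by (simp add: system_of_treks_def comp_inj_on_iff[OF inj_trunc] image_comp
        source_trunc target_trunc)
  show "no_sided_intersection (truncate_trek ` T)"
    unfolding no_sided_intersection_def
  proof (intro ballI impI)
    fix s s' assume "s \<in> truncate_trek ` T" "s' \<in> truncate_trek ` T" "s \<noteq> s'"
    then obtain t t' where t: "t \<in> T" "s = truncate_trek t"
      and t': "t' \<in> T" "s' = truncate_trek t'" and "t \<noteq> t'" by blast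
    have "trek_top t \<noteq> trek_top t'"
      using inj_on_eq_iff[OF inj_top t(1) t'(1)] \<open>t \<noteq> t'\<close> by blast
    moreover have "trek_right t \<inter> trek_right t' = {}"
      using nsi t(1) t'(1) \<open>t \<noteq> t'\<close> unfolding no_sided_intersection_def by blast
    ultimately show "trek_left s \<inter> trek_left s' = {} \<and> trek_right s \<inter> trek_right s' = {}"
      using t t' by simp
  qed
qed

lemma top_of_weak_HTC_trek:
  assumes mg: "mixed_graph m D B" and v: "v \<in> {1..m}" and t: "is_trek m D B t"
    and src: "trek_source t \<notin> {v} \<union> sib B v"
    and half: "trek_source t \<in> htr m D B v \<longrightarrow> is_half_trek m D B t"
  shows "trek_top t = trek_source t \<or>
    trek_source t \<notin> htr m D B v \<and> trek_top t \<notin> {v} \<union> sib B v \<union> htr m D B v"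
proof (cases "is_half_trek m D B t")
  case True
  then show ?thesis using half_trek_source_eq_top by metis
next
  case False
  then have "trek_source t \<notin> half_trek_reach m D B v"
    using half src half_trek_reach_eq[OF mg v] by blast
  then have "trek_top t \<notin> half_trek_reach m D B v"
    using trek_source_reach t by blast
  then show ?thesis
    using False half half_trek_reach_eq[OF mg v] by blast
qed

lemma image_agree_on:
  assumes agree: "\<And>x. x \<in> T \<Longrightarrow> f x = g x \<or> g x \<notin> A \<and> f x \<notin> C \<union> A"
    and disj: "g ` T \<inter> C = {}"
  shows "f ` T \<inter> C = {}" and "f ` T \<inter> A = g ` T \<inter> A"
proof -
  have same: "f x = g x" if "x \<in> T" and "f x \<in> C \<union> A \<or> g x \<in> A" for x
    using agree[OF that(1)] that(2) by blast
  show "f ` T \<inter> C = {}"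
    using disj by (force dest: same)
  show "f ` T \<inter> A = g ` T \<inter> A"
    by (force dest: same)
qed

theorem mainTheorem5:
  fixes m :: nat and D B :: "(nat \<times> nat) set" and v :: nat and W :: "nat set"
  assumes "mixed_graph m D B"
    and "v \<in> {1..m}"
    and "W \<subseteq> {1..m}"
    and "weak_HTC m D B v W"
  shows "\<exists>Y \<subseteq> {1..m}. HTC m D B v Y \<and> Y \<inter> htr m D B v = W \<inter> htr m D B v"
proof -
  obtain T where W_disj: "W \<inter> ({v} \<union> sib B v) = {}"
    and treks: "\<forall>t\<in>T. is_trek m D B t" and sys: "system_of_treks T W (pa D v)"
    and nsi: "no_sided_intersection T"
    and half: "\<forall>t\<in>T. trek_source t \<in> htr m D B v \<longrightarrow> is_half_trek m D B t"
    using assms(4) unfolding weak_HTC_def by blast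
  define Y where "Y = trek_top ` T"
  have W_eq: "W = trek_source ` T" using sys by (simp add: system_of_treks_def)
  have tops: "trek_top t = trek_source t \<or>
      trek_source t \<notin> htr m D B v \<and> trek_top t \<notin> ({v} \<union> sib B v) \<union> htr m D B v"
    if t: "t \<in> T" for t
  proof (rule top_of_weak_HTC_trek[OF assms(1,2)])
    show "is_trek m D B t" using treks t by blast
    show "trek_source t \<notin> {v} \<union> sib B v" using W_disj W_eq t by blast
    show "trek_source t \<in> htr m D B v \<longrightarrow> is_half_trek m D B t" using half t by blast
  qed
  note Y_props = image_agree_on[of T trek_top trek_source "htr m D B v" "{v} \<union> sib B v",
      OF tops W_disj[unfolded W_eq], folded Y_def W_eq]
  note trunc = truncated_system_of_treks[OF treks sys nsi, folded Y_def]
  have "HTC m D B v Y"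
    unfolding HTC_def
  proof (intro conjI exI[of _ "truncate_trek ` T"])
    show "card Y = card (pa D v)" using card_system_of_treks[OF trunc(2)] .
    show "Y \<inter> ({v} \<union> sib B v) = {}" using Y_props(1) .
  qed (fact trunc)+
  moreover have "Y \<subseteq> {1..m}"
  proof
    fix y assume "y \<in> Y"
    then obtain t where "t \<in> T" and "y = trek_top t" unfolding Y_def by blast
    then show "y \<in> {1..m}" using treks trek_top_in_range by metis
  qed
  ultimately show ?thesis using Y_props(2) by blast
qed

end
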